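(* Let $G,H$ be graphs (connected or not, each with at least one vertex), and write $a=\widetilde\iota(G)$, $b=\widetilde\iota(H)$. Then $$\iota(G+H)=\begin{cases}\dfrac{ab-1}{a+b-2}, & a,b<\infty,\ a+b\neq2,\\[2mm] 1, & a=b=1,\\ \infty, & a+b=2,\ (a,b)\neq(1,1),\\ b, & a=\infty,\ b<\infty,\\ a, & b=\infty,\ a<\infty,\\ \infty, & a=b=\infty.\end{cases}$$
   Context: For a connected graph $G$ on vertices $v_1,\dots,v_n$, its distance matrix is $D=(d(v_i,v_j))_{i,j=1}^n$, where $d$ is the shortest-path distance; $\vec 1$ denotes the all-ones vector. $G$ is distance exceptional if $D\vec x=\vec 1$ has no solution. Curvature index $\iota(G)\in\mathbb{R}\cup\{\infty\}$ of a connected graph: if $D\vec x=\vec1$ has no solution or has a solution with $\vec 1^\top\vec x\neq0$, then $\iota(G)$ is the unique real number with $\{D\vec x:\vec 1^\top\vec x=1\}\cap\mathbb{R}\vec 1=\{\iota(G)\vec 1\}$; otherwise (solutions exist and all have $\vec 1^\top\vec x=0$) $\iota(G)=\infty$. The join $G+H$ is obtained from the disjoint union of $G$ and $H$ by adding all edges between $V(G)$ and $V(H)$. For a graph $G$ (possibly disconnected) on $n$ vertices, $\widetilde D(G)\in\mathbb{R}^{n\times n}$ is the principal submatrix indexed by $V(G)$ of the distance matrix of the cone $G+\mathsf{K}_1$; i.e. $\widetilde D(G)_{uv}=0$ if $u=v$, $1$ if $u\sim v$, and $2$ otherwise. The modified curvature index $\widetilde\iota(G)\in\mathbb{R}\cup\{\infty\}$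 is defined exactly as $\iota$ with $D$ replaced by $\widetilde D(G)$: if $\widetilde D(G)\vec x=\vec 1$ has no solution or has a solution with $\vec1^\top\vec x\ne0$, then $\widetilde\iota(G)$ is the unique real with $\{\widetilde D(G)\vec x:\vec1^\top\vec x=1\}\cap\mathbb{R}\vec1=\{\widetilde\iota(G)\vec1\}$; otherwise $\widetilde\iota(G)=\infty$. *)

theory Defs
  imports "HOL-Analysis.Analysis" "HOL-Library.Extended_Real"
begin

text \<open>Real vectors indexed by V are functions V \<Rightarrow> real (values outside V
are irrelevant); a V\<times>V matrix is a function of two vertices.\<close>

definition graph :: "'a set \<Rightarrow> ('a \<Rightarrow> 'a \<Rightarrow> bool) \<Rightarrow> bool" where
  "graph V E \<longleftrightarrow> finite V \<and> V \<noteq> {} \<and> (\<forall>u v. E u v \<longrightarrow> E v u)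
     \<and> (\<forall>u. \<not> E u u) \<and> (\<forall>u v. E u v \<longrightarrow> u \<in> V \<and> v \<in> V)"

definition walk_of_len :: "'a set \<Rightarrow> ('a \<Rightarrow> 'a \<Rightarrow> bool) \<Rightarrow> 'a \<Rightarrow> 'a \<Rightarrow> nat \<Rightarrow> bool" where
  "walk_of_len V E u v n \<longleftrightarrow> (\<exists>xs. length xs = Suc n \<and> xs ! 0 = u \<and> xs ! n = v
      \<and> set xs \<subseteq> V \<and> (\<forall>i<n. E (xs ! i) (xs ! Suc i)))"

text \<open>Shortest-path distance (meaningful when u, v are in the same component).\<close>
definition graph_dist :: "'a set \<Rightarrow> ('a \<Rightarrow> 'a \<Rightarrow> bool) \<Rightarrow> 'a \<Rightarrow> 'a \<Rightarrow> nat" where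
  "graph_dist V E u v = (LEAST n. walk_of_len V E u v n)"

definition connected_graph :: "'a set \<Rightarrow> ('a \<Rightarrow> 'a \<Rightarrow> bool) \<Rightarrow> bool" where
  "connected_graph V E \<longleftrightarrow> graph V E \<and> (\<forall>u\<in>V. \<forall>v\<in>V. \<exists>n. walk_of_len V E u v n)"

definition dist_matrix :: "'a set \<Rightarrow> ('a \<Rightarrow> 'a \<Rightarrow> bool) \<Rightarrow> 'a \<Rightarrow> 'a \<Rightarrow> real" where
  "dist_matrix V E u v = real (graph_dist V E u v)"

text \<open>Modified distance matrix: principal submatrix of the distance matrix of the cone.\<close>
definition mod_dist_matrix :: "('a \<Rightarrow> 'a \<Rightarrow> bool) \<Rightarrow> 'a \<Rightarrow> 'a \<Rightarrow> real" where
  "mod_dist_matrix E u v = (if u = v then 0 else if E u v then 1 else 2)"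

definition mat_vec :: "'a set \<Rightarrow> ('a \<Rightarrow> 'a \<Rightarrow> real) \<Rightarrow> ('a \<Rightarrow> real) \<Rightarrow> 'a \<Rightarrow> real" where
  "mat_vec V M x u = (\<Sum>v\<in>V. M u v * x v)"

text \<open>Generic curvature index of a square matrix M indexed by V, valued in
  \<real> \<union> {\<infinity>} (rendered in ereal; the value -\<infinity> never occurs).\<close>
definition curv_index :: "'a set \<Rightarrow> ('a \<Rightarrow> 'a \<Rightarrow> real) \<Rightarrow> ereal" where
  "curv_index V M =
    (if (\<not> (\<exists>x. \<forall>u\<in>V. mat_vec V M x u = 1))
        \<or> (\<exists>x. (\<forall>u\<in>V. mat_vec V M x u = 1) \<and> (\<Sum>v\<in>V. x v) \<noteq> 0)
     then ereal (THE c. {d. \<exists>x. (\<Sum>v\<in>V. x v) = 1 \<and> (\<forall>u\<in>V. mat_vec V M x u = d)} = {c})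
     else \<infinity>)"

definition curvature_index :: "'a set \<Rightarrow> ('a \<Rightarrow> 'a \<Rightarrow> bool) \<Rightarrow> ereal" where
  "curvature_index V E = curv_index V (dist_matrix V E)"

definition mod_curvature_index :: "'a set \<Rightarrow> ('a \<Rightarrow> 'a \<Rightarrow> bool) \<Rightarrow> ereal" where
  "mod_curvature_index V E = curv_index V (mod_dist_matrix E)"

definition join_verts :: "'a set \<Rightarrow> 'b set \<Rightarrow> ('a + 'b) set" where
  "join_verts V W = Inl ` V \<union> Inr ` W"

fun join_edges :: "'a set \<Rightarrow> ('a \<Rightarrow> 'a \<Rightarrow> bool) \<Rightarrow> 'b set \<Rightarrow> ('b \<Rightarrow> 'b \<Rightarrow> bool)
    \<Rightarrow> 'a + 'b \<Rightarrow> 'a + 'b \<Rightarrow> bool" where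
  "join_edges V E W F (Inl a) (Inl b) = E a b"
| "join_edges V E W F (Inr a) (Inr b) = F a b"
| "join_edges V E W F (Inl a) (Inr b) = (a \<in> V \<and> b \<in> W)"
| "join_edges V E W F (Inr a) (Inl b) = (a \<in> W \<and> b \<in> V)"

end

theory Submission
  imports Defs
begin

text \<open>For a symmetric matrix M, call a pair (\<sigma>, e) attainable if M x = e \<one> for some x whose
  entries sum to \<sigma>. The attainable pairs form a line through the origin of the (\<sigma>, e)-plane:
  they form a subspace, any two of them are proportional because x' M y = y' M x, and the
  Fredholm alternative rules out the zero subspace. The curvature index is the slope of this line,
  \<infinity> standing for the vertical line \<sigma> = 0.

  Any two non-adjacent vertices of G + H have a common neighbour, so the distance matrix of
  G + H is the block matrix with the modified distance matrices of G and H on the diagonal and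
  all-ones blocks off it. A vector (y, z) whose parts sum to \<sigma> and \<tau> is mapped to d \<one>
  exactly when (\<sigma>, d - \<tau>) is attainable for G and (\<tau>, d - \<sigma>) for H, so \<iota>(G + H) is found
  by intersecting two lines.\<close>

text \<open>Gaussian elimination of the unknown v with the pivot row p: subtracting A u v / A p v times
  row p from each row u leaves a system in the unknowns V on the rows U - {p}.\<close>

lemma elimination_solution_lift:
  fixes A :: "'r \<Rightarrow> 'c \<Rightarrow> real"
  assumes "finite V" "v \<notin> V" "A p v \<noteq> 0"
    and reduced: "\<forall>u\<in>U - {p}. (\<Sum>w\<in>V. (A u w - A u v / A p v * A p w) * x w)
                                = b u - A u v / A p v * b p"
  shows "\<exists>y. \<forall>u\<in>U. (\<Sum>w\<in>insert v V. A u w * y w) = b u"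
proof -
  define c where "c u = A u v / A p v" for u
  define s where "s = (\<Sum>w\<in>V. A p w * x w)"
  define y where "y = x(v := (b p - s) / A p v)"
  have "(\<Sum>w\<in>insert v V. A u w * y w)
          = (\<Sum>w\<in>V. (A u w - c u * A p w) * x w) + c u * b p" for u
  proof -
    have "(\<Sum>w\<in>V. A u w * y w) = (\<Sum>w\<in>V. A u w * x w)"
      using assms(2) by (intro sum.cong) (auto simp: y_def)
    also have "\<dots> = (\<Sum>w\<in>V. (A u w - c u * A p w) * x w) + c u * s"
      by (simp add: s_def algebra_simps sum_distrib_left sum_subtractf)
    moreover have "A u v * y v = c u * (b p - s)"
      using assms(3) by (simp add: y_def c_def)
    ultimately show ?thesis
      using assms(1,2) by (simp add: algebra_simps)
  qed
  moreover have "c p = 1"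
    using assms(3) by (simp add: c_def)
  ultimately have "(\<Sum>w\<in>insert v V. A u w * y w) = b u" if "u \<in> U" for u
    using reduced that by (cases "u = p") (simp_all add: c_def[symmetric])
  then show ?thesis by blast
qed

lemma elimination_certificate_lift:
  fixes A :: "'r \<Rightarrow> 'c \<Rightarrow> real"
  assumes "finite U" "p \<in> U" "A p v \<noteq> 0"
    and reduced: "\<forall>w\<in>V. (\<Sum>u\<in>U - {p}. z u * (A u w - A u v / A p v * A p w)) = 0"
      "(\<Sum>u\<in>U - {p}. z u * (b u - A u v / A p v * b p)) \<noteq> 0"
  shows "\<exists>y. (\<forall>w\<in>insert v V. (\<Sum>u\<in>U. y u * A u w) = 0) \<and> (\<Sum>u\<in>U. y u * b u) \<noteq> 0"
proof -
  define c where "c u = A u v / A p v" for u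
  define y where "y = z(p := - (\<Sum>u\<in>U - {p}. z u * c u))"
  have combine: "(\<Sum>u\<in>U. y u * f u) = (\<Sum>u\<in>U - {p}. z u * (f u - c u * f p))" for f
  proof -
    have "(\<Sum>u\<in>U - {p}. y u * f u) = (\<Sum>u\<in>U - {p}. z u * f u)"
      by (intro sum.cong) (auto simp: y_def)
    then have "(\<Sum>u\<in>U. y u * f u) = y p * f p + (\<Sum>u\<in>U - {p}. z u * f u)"
      using assms(1,2) by (simp add: sum.remove)
    moreover have "y p = - (\<Sum>u\<in>U - {p}. z u * c u)"
      by (simp add: y_def)
    ultimately show ?thesis
      by (simp add: algebra_simps sum_subtractf sum_distrib_left sum_distrib_right)
  qed
  have "(\<Sum>u\<in>U - {p}. z u * (A u v - c u * A p v)) = 0"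
    using assms(3) by (simp add: c_def)
  then have "\<forall>w\<in>insert v V. (\<Sum>u\<in>U. y u * A u w) = 0"
    using reduced(1) by (auto simp: combine c_def)
  moreover have "(\<Sum>u\<in>U. y u * b u) \<noteq> 0"
    using reduced(2) by (simp add: combine c_def)
  ultimately show ?thesis by blast
qed

lemma fredholm_alternative:
  fixes A :: "'r \<Rightarrow> 'c \<Rightarrow> real" and b :: "'r \<Rightarrow> real"
  assumes "finite V" "finite U"
  shows "(\<exists>x. \<forall>u\<in>U. (\<Sum>v\<in>V. A u v * x v) = b u)
       \<or> (\<exists>z. (\<forall>v\<in>V. (\<Sum>u\<in>U. z u * A u v) = 0) \<and> (\<Sum>u\<in>U. z u * b u) \<noteq> 0)"
  using assms
proof (induction V arbitrary: U A b rule: finite_induct)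
  case empty
  show ?case
  proof (cases "\<forall>u\<in>U. b u = 0")
    case False
    then have "(\<Sum>u\<in>U. b u * b u) \<noteq> 0"
      using empty.prems by (subst sum_nonneg_eq_0_iff) auto
    then show ?thesis by auto
  qed auto
next
  case (insert v V)
  show ?case
  proof (cases "\<forall>u\<in>U. A u v = 0")
    case True
    then show ?thesis
      using insert.IH[OF insert.prems, of A b] insert.hyps by auto
  next
    case False
    then obtain p where p: "p \<in> U" "A p v \<noteq> 0" by auto
    show ?thesis
      using insert.IH[of "U - {p}" "\<lambda>u w. A u w - A u v / A p v * A p w"
          "\<lambda>u. b u - A u v / A p v * b p"] insert.prems insert.hyps p
        elimination_solution_lift[of V v A p U] elimination_certificate_lift[of U p A v V]
      by blast
  qed
qed

definition symmetric_on :: "'a set \<Rightarrow> ('a \<Rightarrow> 'a \<Rightarrow> real) \<Rightarrow> bool" where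
  "symmetric_on V M \<longleftrightarrow> (\<forall>u\<in>V. \<forall>v\<in>V. M u v = M v u)"

definition const_solution :: "'a set \<Rightarrow> ('a \<Rightarrow> 'a \<Rightarrow> real) \<Rightarrow> real \<Rightarrow> real \<Rightarrow> bool" where
  "const_solution V M \<sigma> e \<longleftrightarrow> (\<exists>x. (\<Sum>v\<in>V. x v) = \<sigma> \<and> (\<forall>u\<in>V. mat_vec V M x u = e))"

lemma const_solution_scale:
  assumes "const_solution V M \<sigma> e"
  shows "const_solution V M (c * \<sigma>) (c * e)"
proof -
  obtain x where "(\<Sum>v\<in>V. x v) = \<sigma>" "\<forall>u\<in>V. mat_vec V M x u = e"
    using assms by (auto simp: const_solution_def)
  then have "(\<Sum>v\<in>V. c * x v) = c * \<sigma>" "\<forall>u\<in>V. mat_vec V M (\<lambda>v. c * x v) u = c * e"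
    by (auto simp: mat_vec_def sum_distrib_left mult.left_commute)
  then show ?thesis
    unfolding const_solution_def by blast
qed

lemma symmetric_on_bilinear:
  assumes "symmetric_on V M"
  shows "(\<Sum>u\<in>V. x u * mat_vec V M y u) = (\<Sum>u\<in>V. y u * mat_vec V M x u)"
proof -
  have "(\<Sum>u\<in>V. x u * mat_vec V M y u) = (\<Sum>u\<in>V. \<Sum>v\<in>V. x u * M u v * y v)"
    by (simp add: mat_vec_def sum_distrib_left mult.assoc)
  also have "\<dots> = (\<Sum>v\<in>V. \<Sum>u\<in>V. x u * M u v * y v)"
    by (rule sum.swap)
  also have "\<dots> = (\<Sum>v\<in>V. y v * mat_vec V M x v)"
    using assms unfolding mat_vec_def sum_distrib_left symmetric_on_def
    by (intro sum.cong refl) (simp add: mult_ac)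
  finally show ?thesis .
qed

lemma const_solution_proportional:
  assumes "symmetric_on V M" "const_solution V M \<sigma>\<^sub>1 e\<^sub>1" "const_solution V M \<sigma>\<^sub>2 e\<^sub>2"
  shows "\<sigma>\<^sub>1 * e\<^sub>2 = \<sigma>\<^sub>2 * e\<^sub>1"
proof -
  obtain x where x: "(\<Sum>v\<in>V. x v) = \<sigma>\<^sub>1" "\<forall>u\<in>V. mat_vec V M x u = e\<^sub>1"
    using assms(2) by (auto simp: const_solution_def)
  obtain y where y: "(\<Sum>v\<in>V. y v) = \<sigma>\<^sub>2" "\<forall>u\<in>V. mat_vec V M y u = e\<^sub>2"
    using assms(3) by (auto simp: const_solution_def)
  have "\<sigma>\<^sub>1 * e\<^sub>2 = (\<Sum>u\<in>V. x u * mat_vec V M y u)"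
    using y(2) by (simp add: sum_distrib_right flip: x(1))
  also have "\<dots> = (\<Sum>u\<in>V. y u * mat_vec V M x u)"
    using assms(1) by (rule symmetric_on_bilinear)
  also have "\<dots> = \<sigma>\<^sub>2 * e\<^sub>1"
    using x(2) by (simp add: sum_distrib_right flip: y(1))
  finally show ?thesis .
qed

lemma const_solution_nontrivial:
  assumes "finite V" "symmetric_on V M"
  shows "(\<exists>\<sigma>. const_solution V M \<sigma> 1) \<or> const_solution V M 1 0"
proof (cases "\<exists>x. \<forall>u\<in>V. mat_vec V M x u = 1")
  case True
  then show ?thesis
    unfolding const_solution_def by blast
next
  case False
  then obtain z where z: "\<forall>v\<in>V. (\<Sum>u\<in>V. z u * M u v) = 0" "(\<Sum>u\<in>V. z u) \<noteq> 0"
    using fredholm_alternative[OF assms(1) assms(1), of M "\<lambda>_. 1"]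
    by (auto simp: mat_vec_def)
  have "mat_vec V M z v = (\<Sum>u\<in>V. z u * M u v)" if "v \<in> V" for v
    using assms(2) that unfolding mat_vec_def symmetric_on_def by (intro sum.cong) auto
  then have "\<forall>v\<in>V. mat_vec V M z v = 0"
    using z(1) by simp
  then have "const_solution V M (\<Sum>u\<in>V. z u) 0"
    unfolding const_solution_def by blast
  from const_solution_scale[OF this, of "inverse (\<Sum>u\<in>V. z u)"]
  show ?thesis
    using z(2) by simp
qed

lemma curv_index_eq_ereal:
  assumes "symmetric_on V M" "const_solution V M 1 d"
  shows "curv_index V M = ereal d"
proof -
  have "(\<Sum>v\<in>V. x v) \<noteq> 0" if "\<forall>u\<in>V. mat_vec V M x u = 1" for x
  proof -
    have "const_solution V M (\<Sum>v\<in>V. x v) 1"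
      using that unfolding const_solution_def by blast
    then have "1 = (\<Sum>v\<in>V. x v) * d"
      using const_solution_proportional[OF assms] by simp
    then show ?thesis by auto
  qed
  then have "\<not> (\<exists>x. \<forall>u\<in>V. mat_vec V M x u = 1)
      \<or> (\<exists>x. (\<forall>u\<in>V. mat_vec V M x u = 1) \<and> (\<Sum>v\<in>V. x v) \<noteq> 0)"
    by blast
  moreover have "const_solution V M 1 d' \<longleftrightarrow> d' = d" for d'
    using const_solution_proportional[OF assms(1) _ assms(2), of 1 d'] assms(2) by auto
  then have "{d'. \<exists>x. (\<Sum>v\<in>V. x v) = 1 \<and> (\<forall>u\<in>V. mat_vec V M x u = d')} = {d}"
    unfolding const_solution_def by blast
  ultimately show ?thesis
    unfolding curv_index_def by (simp only: if_True the_elem_eq[unfolded the_elem_def])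
qed

lemma curv_index_eq_infinity:
  assumes "finite V" "symmetric_on V M" "\<And>d. \<not> const_solution V M 1 d"
  shows "curv_index V M = \<infinity>"
proof -
  have "\<exists>x. \<forall>u\<in>V. mat_vec V M x u = 1"
    using const_solution_nontrivial[OF assms(1,2)] assms(3)
    unfolding const_solution_def by blast
  moreover have "(\<Sum>v\<in>V. x v) = 0" if "\<forall>u\<in>V. mat_vec V M x u = 1" for x
  proof (rule ccontr)
    assume nonzero: "(\<Sum>v\<in>V. x v) \<noteq> 0"
    have "const_solution V M (\<Sum>v\<in>V. x v) 1"
      using that unfolding const_solution_def by blast
    from const_solution_scale[OF this, of "inverse (\<Sum>v\<in>V. x v)"]
    have "const_solution V M 1 (inverse (\<Sum>v\<in>V. x v))"
      using nonzero by simp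
    then show False
      using assms(3) by blast
  qed
  ultimately have "\<not> (\<not> (\<exists>x. \<forall>u\<in>V. mat_vec V M x u = 1)
      \<or> (\<exists>x. (\<forall>u\<in>V. mat_vec V M x u = 1) \<and> (\<Sum>v\<in>V. x v) \<noteq> 0))"
    by blast
  then show ?thesis
    unfolding curv_index_def by (rule if_not_P)
qed

lemma curv_index_neq_MInf: "curv_index V M \<noteq> - \<infinity>"
  unfolding curv_index_def by simp

lemma curv_index_eq_ereal_iff:
  assumes "finite V" "symmetric_on V M"
  shows "curv_index V M = ereal d \<longleftrightarrow> const_solution V M 1 d"
proof (cases "\<exists>d'. const_solution V M 1 d'")
  case True
  then show ?thesis
    using curv_index_eq_ereal[OF assms(2)] by auto
next
  case False
  then show ?thesis
    using curv_index_eq_infinity[OF assms] by auto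
qed

definition on_slope_line :: "ereal \<Rightarrow> real \<Rightarrow> real \<Rightarrow> bool" where
  "on_slope_line a \<sigma> e \<longleftrightarrow> (if a = \<infinity> then \<sigma> = 0 else e = \<sigma> * real_of_ereal a)"

lemma const_solution_iff_on_slope_line:
  assumes "finite V" "symmetric_on V M"
  shows "const_solution V M \<sigma> e \<longleftrightarrow> on_slope_line (curv_index V M) \<sigma> e"
proof (cases "\<exists>d. const_solution V M 1 d")
  case True
  then obtain d where d: "const_solution V M 1 d" by blast
  have "const_solution V M \<sigma> e \<longleftrightarrow> e = \<sigma> * d"
  proof
    assume "const_solution V M \<sigma> e"
    then show "e = \<sigma> * d"
      using const_solution_proportional[OF assms(2) d] by simp
  next
    assume "e = \<sigma> * d"
    then show "const_solution V M \<sigma> e"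
      using const_solution_scale[OF d, of \<sigma>] by simp
  qed
  then show ?thesis
    using curv_index_eq_ereal[OF assms(2) d] by (simp add: on_slope_line_def)
next
  case False
  obtain \<sigma>\<^sub>0 where \<sigma>\<^sub>0: "const_solution V M \<sigma>\<^sub>0 1"
    using const_solution_nontrivial[OF assms] False by blast
  have sum_zero: "\<sigma>' = 0" if "const_solution V M \<sigma>' e'" for \<sigma>' e'
  proof (rule ccontr)
    assume "\<sigma>' \<noteq> 0"
    with const_solution_scale[OF that, of "inverse \<sigma>'"]
    have "const_solution V M 1 (inverse \<sigma>' * e')" by simp
    with False show False by blast
  qed
  have "const_solution V M \<sigma> e \<longleftrightarrow> \<sigma> = 0"
  proof
    assume "\<sigma> = 0"
    then show "const_solution V M \<sigma> e"
      using const_solution_scale[OF \<sigma>\<^sub>0, of e] sum_zero[OF \<sigma>\<^sub>0] by simp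
  qed (rule sum_zero)
  then show ?thesis
    using curv_index_eq_infinity[OF assms] False by (simp add: on_slope_line_def)
qed

lemma curv_index_cong:
  assumes "\<And>u v. u \<in> V \<Longrightarrow> v \<in> V \<Longrightarrow> M u v = M' u v"
  shows "curv_index V M = curv_index V M'"
proof -
  have "u \<in> V \<Longrightarrow> mat_vec V M x u = mat_vec V M' x u" for x u
    using assms unfolding mat_vec_def by (intro sum.cong) auto
  then have "(\<forall>u\<in>V. mat_vec V M x u = d) \<longleftrightarrow> (\<forall>u\<in>V. mat_vec V M' x u = d)" for x d
    by auto
  then show ?thesis
    unfolding curv_index_def by (simp only:)
qed

fun join_matrix :: "('a \<Rightarrow> 'a \<Rightarrow> real) \<Rightarrow> ('b \<Rightarrow> 'b \<Rightarrow> real) \<Rightarrow> 'a + 'b \<Rightarrow> 'a + 'b \<Rightarrow> real" where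
  "join_matrix M N (Inl u) (Inl v) = M u v"
| "join_matrix M N (Inr u) (Inr v) = N u v"
| "join_matrix M N (Inl u) (Inr v) = 1"
| "join_matrix M N (Inr u) (Inl v) = 1"

lemma symmetric_on_join_matrix:
  assumes "symmetric_on V M" "symmetric_on W N"
  shows "symmetric_on (join_verts V W) (join_matrix M N)"
  using assms unfolding symmetric_on_def join_verts_def by auto

lemma sum_join_verts:
  assumes "finite V" "finite W"
  shows "(\<Sum>p\<in>join_verts V W. f p) = (\<Sum>v\<in>V. f (Inl v)) + (\<Sum>w\<in>W. f (Inr w))"
  unfolding join_verts_def using assms
  by (subst sum.union_disjoint) (auto simp: sum.reindex)

lemma const_solution_join_matrix:
  assumes "finite V" "finite W"
  shows "const_solution (join_verts V W) (join_matrix M N) s d \<longleftrightarrow>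
    (\<exists>\<sigma> \<tau>. \<sigma> + \<tau> = s \<and> const_solution V M \<sigma> (d - \<tau>) \<and> const_solution W N \<tau> (d - \<sigma>))"
proof -
  have mat_vec_Inl: "mat_vec (join_verts V W) (join_matrix M N) z (Inl u)
      = mat_vec V M (\<lambda>v. z (Inl v)) u + (\<Sum>w\<in>W. z (Inr w))" for z u
    unfolding mat_vec_def by (simp add: sum_join_verts[OF assms])
  have mat_vec_Inr: "mat_vec (join_verts V W) (join_matrix M N) z (Inr u)
      = mat_vec W N (\<lambda>w. z (Inr w)) u + (\<Sum>v\<in>V. z (Inl v))" for z u
    unfolding mat_vec_def by (simp add: sum_join_verts[OF assms])
  have ball_join: "(\<forall>p\<in>join_verts V W. P p) \<longleftrightarrow> (\<forall>v\<in>V. P (Inl v)) \<and> (\<forall>w\<in>W. P (Inr w))" for P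
    unfolding join_verts_def by auto
  show ?thesis
  proof
    assume "const_solution (join_verts V W) (join_matrix M N) s d"
    then obtain z where "(\<Sum>p\<in>join_verts V W. z p) = s"
        "\<forall>p\<in>join_verts V W. mat_vec (join_verts V W) (join_matrix M N) z p = d"
      unfolding const_solution_def by blast
    then show "\<exists>\<sigma> \<tau>. \<sigma> + \<tau> = s \<and> const_solution V M \<sigma> (d - \<tau>) \<and> const_solution W N \<tau> (d - \<sigma>)"
      unfolding sum_join_verts[OF assms] ball_join mat_vec_Inl mat_vec_Inr const_solution_def
      by (intro exI conjI) auto
  next
    assume "\<exists>\<sigma> \<tau>. \<sigma> + \<tau> = s \<and> const_solution V M \<sigma> (d - \<tau>) \<and> const_solution W N \<tau> (d - \<sigma>)"
    then obtain \<sigma> \<tau> x y where "\<sigma> + \<tau> = s"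
        "(\<Sum>v\<in>V. x v) = \<sigma>" "\<forall>u\<in>V. mat_vec V M x u = d - \<tau>"
        "(\<Sum>w\<in>W. y w) = \<tau>" "\<forall>u\<in>W. mat_vec W N y u = d - \<sigma>"
      unfolding const_solution_def by blast
    then show "const_solution (join_verts V W) (join_matrix M N) s d"
      unfolding const_solution_def sum_join_verts[OF assms] ball_join mat_vec_Inl mat_vec_Inr
      by (intro exI[of _ "case_sum x y"]) simp
  qed
qed

definition join_curvature :: "ereal \<Rightarrow> ereal \<Rightarrow> ereal" where
  "join_curvature a b =
    (if a = \<infinity> then b else if b = \<infinity> then a
     else if a + b = 2 then (if a = 1 then 1 else \<infinity>)
     else ereal ((real_of_ereal a * real_of_ereal b - 1) / (real_of_ereal a + real_of_ereal b - 2)))"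

lemma real_lines_meet_iff:
  fixes a b d :: real
  shows "(\<exists>\<sigma> \<tau>. \<sigma> + \<tau> = 1 \<and> d - \<tau> = \<sigma> * a \<and> d - \<sigma> = \<tau> * b)
     \<longleftrightarrow> (if a + b = 2 then a = 1 \<and> d = 1 else d = (a * b - 1) / (a + b - 2))"
proof
  assume "\<exists>\<sigma> \<tau>. \<sigma> + \<tau> = 1 \<and> d - \<tau> = \<sigma> * a \<and> d - \<sigma> = \<tau> * b"
  then obtain \<sigma> \<tau> where sum: "\<sigma> + \<tau> = 1" and "d - \<tau> = \<sigma> * a" "d - \<sigma> = \<tau> * b"
    by blast
  moreover have "\<tau> = 1 - \<sigma>"
    using sum by simp
  ultimately have line_a: "d = 1 + \<sigma> * (a - 1)" and line_b: "d = b + \<sigma> * (1 - b)"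
    by (simp_all add: algebra_simps)
  then have meet: "\<sigma> * (a + b - 2) = b - 1"
    by (simp add: algebra_simps)
  show "if a + b = 2 then a = 1 \<and> d = 1 else d = (a * b - 1) / (a + b - 2)"
  proof (cases "a + b = 2")
    case True
    then show ?thesis
      using meet line_a by auto
  next
    case False
    have "d * (a + b - 2) = (a + b - 2) + \<sigma> * (a + b - 2) * (a - 1)"
      unfolding line_a by (simp add: algebra_simps)
    also have "\<dots> = a * b - 1"
      unfolding meet by (simp add: algebra_simps)
    finally show ?thesis
      using False by (simp add: eq_divide_eq)
  qed
next
  assume rhs: "if a + b = 2 then a = 1 \<and> d = 1 else d = (a * b - 1) / (a + b - 2)"
  show "\<exists>\<sigma> \<tau>. \<sigma> + \<tau> = 1 \<and> d - \<tau> = \<sigma> * a \<and> d - \<sigma> = \<tau> * b"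
  proof (cases "a + b = 2")
    case True
    then show ?thesis
      using rhs by (intro exI[of _ 0] exI[of _ 1]) auto
  next
    case False
    define D where "D = a + b - 2"
    have "D \<noteq> 0" "d = (a * b - 1) / D"
      using False rhs by (simp_all add: D_def)
    then have "d - (1 - (b - 1) / D) = (b - 1) / D * a" "d - (b - 1) / D = (1 - (b - 1) / D) * b"
      by (simp_all add: field_simps) (simp_all add: D_def algebra_simps)
    then show ?thesis
      by (intro exI[of _ "(b - 1) / D"] exI[of _ "1 - (b - 1) / D"]) simp
  qed
qed

lemma slope_lines_meet_iff:
  assumes "a \<noteq> - \<infinity>" "b \<noteq> - \<infinity>"
  shows "(\<exists>\<sigma> \<tau>. \<sigma> + \<tau> = 1 \<and> on_slope_line a \<sigma> (d - \<tau>) \<and> on_slope_line b \<tau> (d - \<sigma>))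
     \<longleftrightarrow> ereal d = join_curvature a b"
proof (cases a; cases b)
  fix ra rb assume "a = ereal ra" "b = ereal rb"
  then show ?thesis
    using real_lines_meet_iff[where a = ra and b = rb]
    by (simp add: on_slope_line_def join_curvature_def one_ereal_def)
qed (use assms in \<open>auto simp: on_slope_line_def join_curvature_def\<close>)

lemma curv_index_join_matrix:
  assumes "finite V" "finite W" "symmetric_on V M" "symmetric_on W N"
  shows "curv_index (join_verts V W) (join_matrix M N)
       = join_curvature (curv_index V M) (curv_index W N)"
proof -
  have "finite (join_verts V W)"
    using assms(1,2) by (simp add: join_verts_def)
  have "curv_index (join_verts V W) (join_matrix M N) = ereal d
      \<longleftrightarrow> ereal d = join_curvature (curv_index V M) (curv_index W N)" for d
  proof -
    have "curv_index (join_verts V W) (join_matrix M N) = ereal d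
        \<longleftrightarrow> const_solution (join_verts V W) (join_matrix M N) 1 d"
      using \<open>finite (join_verts V W)\<close> symmetric_on_join_matrix[OF assms(3,4)]
      by (rule curv_index_eq_ereal_iff)
    also have "\<dots> \<longleftrightarrow> (\<exists>\<sigma> \<tau>. \<sigma> + \<tau> = 1 \<and> on_slope_line (curv_index V M) \<sigma> (d - \<tau>)
                                \<and> on_slope_line (curv_index W N) \<tau> (d - \<sigma>))"
      using assms by (simp add: const_solution_join_matrix const_solution_iff_on_slope_line)
    also have "\<dots> \<longleftrightarrow> ereal d = join_curvature (curv_index V M) (curv_index W N)"
      by (intro slope_lines_meet_iff curv_index_neq_MInf)
    finally show ?thesis .
  qed
  moreover have "join_curvature (curv_index V M) (curv_index W N) \<noteq> - \<infinity>"
    using curv_index_neq_MInf[of V M] curv_index_neq_MInf[of W N] by (simp add: join_curvature_def)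
  ultimately show ?thesis
    using curv_index_neq_MInf
    by (cases "curv_index (join_verts V W) (join_matrix M N)";
        cases "join_curvature (curv_index V M) (curv_index W N)") auto
qed

lemma walk_of_len_0_iff: "walk_of_len V E p q 0 \<longleftrightarrow> p = q \<and> p \<in> V"
proof
  assume "walk_of_len V E p q 0"
  then obtain xs where "length xs = 1" "xs ! 0 = p" "xs ! 0 = q" "set xs \<subseteq> V"
    unfolding walk_of_len_def by auto
  then show "p = q \<and> p \<in> V"
    by (metis nth_mem subsetD zero_less_one)
next
  assume "p = q \<and> p \<in> V"
  then show "walk_of_len V E p q 0"
    unfolding walk_of_len_def by (intro exI[of _ "[p]"]) auto
qed

lemma walk_of_len_1_iff: "walk_of_len V E p q (Suc 0) \<longleftrightarrow> E p q \<and> p \<in> V \<and> q \<in> V"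
proof
  assume "walk_of_len V E p q (Suc 0)"
  then obtain xs where "length xs = 2" "xs ! 0 = p" "xs ! 1 = q" "set xs \<subseteq> V" "E p q"
    unfolding walk_of_len_def by (auto simp: numeral_2_eq_2)
  then show "E p q \<and> p \<in> V \<and> q \<in> V"
    by (metis nth_mem one_less_numeral_iff semiring_norm(76) subsetD zero_less_numeral)
next
  assume "E p q \<and> p \<in> V \<and> q \<in> V"
  then show "walk_of_len V E p q (Suc 0)"
    unfolding walk_of_len_def by (intro exI[of _ "[p, q]"]) auto
qed

lemma walk_of_len_2I:
  assumes "E p r" "E r q" "p \<in> V" "r \<in> V" "q \<in> V"
  shows "walk_of_len V E p q 2"
  unfolding walk_of_len_def using assms
  by (intro exI[of _ "[p, r, q]"]) (auto simp: less_Suc_eq numeral_2_eq_2)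

lemma graph_dist_eq_mod_dist_matrix:
  assumes "p \<in> V" "q \<in> V" "p \<noteq> q \<Longrightarrow> \<not> E p q \<Longrightarrow> \<exists>r\<in>V. E p r \<and> E r q"
  shows "real (graph_dist V E p q) = mod_dist_matrix E p q"
proof -
  consider "p = q" | "p \<noteq> q" "E p q" | "p \<noteq> q" "\<not> E p q" by blast
  then show ?thesis
  proof cases
    case 1
    then have "graph_dist V E p q = 0"
      unfolding graph_dist_def using assms(2) by (simp add: walk_of_len_0_iff)
    with 1 show ?thesis by (simp add: mod_dist_matrix_def)
  next
    case 2
    then have "graph_dist V E p q = Suc 0"
      unfolding graph_dist_def using assms(1,2)
      by (intro Least_equality) (auto simp: walk_of_len_1_iff walk_of_len_0_iff Suc_le_eq intro!: gr0I)
    with 2 show ?thesis by (simp add: mod_dist_matrix_def)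
  next
    case 3
    then obtain r where "r \<in> V" "E p r" "E r q"
      using assms(3) by blast
    then have "walk_of_len V E p q 2"
      using assms(1,2) by (intro walk_of_len_2I)
    moreover have "2 \<le> n" if "walk_of_len V E p q n" for n
    proof (rule ccontr)
      assume "\<not> 2 \<le> n"
      then have "n = 0 \<or> n = Suc 0" by auto
      then show False
        using that 3 by (auto simp: walk_of_len_0_iff walk_of_len_1_iff)
    qed
    ultimately have "graph_dist V E p q = 2"
      unfolding graph_dist_def by (rule Least_equality)
    with 3 show ?thesis by (simp add: mod_dist_matrix_def)
  qed
qed

lemma dist_matrix_join:
  assumes "graph V E" "graph W F" "p \<in> join_verts V W" "q \<in> join_verts V W"
  shows "dist_matrix (join_verts V W) (join_edges V E W F) p q
       = join_matrix (mod_dist_matrix E) (mod_dist_matrix F) p q"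
proof -
  obtain v\<^sub>0 w\<^sub>0 where "v\<^sub>0 \<in> V" "w\<^sub>0 \<in> W"
    using assms(1,2) unfolding graph_def by auto
  then have "\<exists>r\<in>join_verts V W. join_edges V E W F p r \<and> join_edges V E W F r q"
    if "p \<noteq> q" "\<not> join_edges V E W F p q"
    using assms(3,4) that unfolding join_verts_def
    by (intro bexI[of _ "case_sum (\<lambda>_. Inr w\<^sub>0) (\<lambda>_. Inl v\<^sub>0) p"]; cases p; cases q) auto
  then have "dist_matrix (join_verts V W) (join_edges V E W F) p q
      = mod_dist_matrix (join_edges V E W F) p q"
    unfolding dist_matrix_def using assms(3,4) by (rule graph_dist_eq_mod_dist_matrix[rotated 2])
  also have "\<dots> = join_matrix (mod_dist_matrix E) (mod_dist_matrix F) p q"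
    using assms(3,4) by (cases p; cases q) (auto simp: mod_dist_matrix_def join_verts_def)
  finally show ?thesis .
qed

lemma symmetric_on_mod_dist_matrix: "graph V E \<Longrightarrow> symmetric_on V (mod_dist_matrix E)"
  unfolding symmetric_on_def mod_dist_matrix_def graph_def by auto

theorem theorem3p7:
  fixes V :: "'a set" and E :: "'a \<Rightarrow> 'a \<Rightarrow> bool"
    and W :: "'b set" and F :: "'b \<Rightarrow> 'b \<Rightarrow> bool"
  assumes "graph V E" and "graph W F"
  defines "a \<equiv> mod_curvature_index V E" and "b \<equiv> mod_curvature_index W F"
  defines "J \<equiv> curvature_index (join_verts V W) (join_edges V E W F)"
  shows "(a \<noteq> \<infinity> \<and> b \<noteq> \<infinity> \<and> a + b \<noteq> 2 \<longrightarrow>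
            J = ereal ((real_of_ereal a * real_of_ereal b - 1) /
                       (real_of_ereal a + real_of_ereal b - 2)))
       \<and> (a = 1 \<and> b = 1 \<longrightarrow> J = 1)
       \<and> (a + b = 2 \<and> \<not> (a = 1 \<and> b = 1) \<longrightarrow> J = \<infinity>)
       \<and> (a = \<infinity> \<and> b \<noteq> \<infinity> \<longrightarrow> J = b)
       \<and> (b = \<infinity> \<and> a \<noteq> \<infinity> \<longrightarrow> J = a)
       \<and> (a = \<infinity> \<and> b = \<infinity> \<longrightarrow> J = \<infinity>)"
proof -
  have "J = curv_index (join_verts V W) (join_matrix (mod_dist_matrix E) (mod_dist_matrix F))"
    unfolding J_def curvature_index_def
    by (rule curv_index_cong) (rule dist_matrix_join[OF assms(1,2)])
  also have "\<dots> = join_curvature a b"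
    unfolding a_def b_def mod_curvature_index_def
    using assms(1,2) by (intro curv_index_join_matrix symmetric_on_mod_dist_matrix) (auto simp: graph_def)
  finally have "J = join_curvature a b" .
  moreover have "a \<noteq> - \<infinity>" "b \<noteq> - \<infinity>"
    unfolding a_def b_def mod_curvature_index_def by (rule curv_index_neq_MInf)+
  ultimately show ?thesis
    by (cases a; cases b) (auto simp: join_curvature_def)
qed

end
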